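(* Let $n\ge1$ and let $X$ be a discrete random variable with exactly $K$ mass points in $[0,1]$ ($K\ge1$). Let $P_Y$ be the output distribution of the binomial channel with $n$ trials induced by $X$, and let $P_{Y_r}$ be the Beta-binomial reference output. Then for every integer $L$ with $K<L\le \frac{n+2}{2}$, \[ \chi^2(P_Y\,\|\,P_{Y_r})\ge B_n(L):=\frac{L-K}{2L\prod_{j=1}^{2L-2}\frac{n+j}{n-j+1}}. \]
   Context: For an integer $n\ge1$, the binomial channel has input $X\in[0,1]$, output $Y\in\{0,\dots,n\}$ and transition law $P_{Y|X}(y|x)=\binom{n}{y}x^y(1-x)^{n-y}$; the output distribution induced by input $P_X$ is $P_Y(y)=\int\binom{n}{y}x^y(1-x)^{n-y}\,dP_X(x)$. The reference input is $X_r\sim\mathrm{Beta}(1/2,1/2)$ with induced Beta-binomial output $P_{Y_r}(y)=\frac{\Gamma(y+1/2)\Gamma(n-y+1/2)}{\pi\,\Gamma(y+1)\Gamma(n-y+1)}$, $y=0,\dots,n$. $\chi^2(P\|Q)=\sum_y \frac{(P(y)-Q(y))^2}{Q(y)}$. *)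

theory Defs
  imports "HOL-Analysis.Analysis" "HOL-Probability.Probability"
begin

definition binom_out :: "nat \<Rightarrow> real pmf \<Rightarrow> nat \<Rightarrow> real" where
  "binom_out n p y = (\<Sum>x\<in>set_pmf p. pmf p x * (real (n choose y) * x ^ y * (1 - x) ^ (n - y)))"

text \<open>Beta-binomial reference output (input Beta(1/2,1/2)).\<close>
definition ref_out :: "nat \<Rightarrow> nat \<Rightarrow> real" where
  "ref_out n y = Gamma (real y + 1/2) * Gamma (real n - real y + 1/2) /
      (pi * Gamma (real y + 1) * Gamma (real n - real y + 1))"

definition chi2 :: "nat \<Rightarrow> (nat \<Rightarrow> real) \<Rightarrow> (nat \<Rightarrow> real) \<Rightarrow> real" where
  "chi2 n P Q = (\<Sum>y\<le>n. (P y - Q y)^2 / Q y)"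

definition B_bound :: "nat \<Rightarrow> nat \<Rightarrow> nat \<Rightarrow> real" where
  "B_bound n K L = (real L - real K) /
     (2 * real L * (\<Prod>j=1..2*L-2. (real n + real j) / (real n - real j + 1)))"

end

theory Submission
  imports Defs
begin

text \<open>
  Let \<open>T h = (\<Sum>y\<le>n. h y \<cdot> b(n, y))\<close> be the Bernstein operator and \<open>T\<^sup>*\<close> its adjoint with respect
  to the arcsine law (the reference input) and the Beta-binomial reference output. The operator
  \<open>S = T T\<^sup>*\<close> is self-adjoint and maps polynomials of degree \<open>\<le> k\<close> to themselves, multiplying the
  leading coefficient by \<open>\<lambda>(k) = (\<Prod>i<k. (n - i) / (n + i + 1))\<close>. Hence the shifted Chebyshev
  polynomials, orthogonal for the arcsine law, are its eigenvectors, and \<open>\<lambda>\<close> is decreasing.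

  Let \<open>G \<ge> 0\<close> be a polynomial of degree \<open>m \<le> n\<close> vanishing at the mass points of \<open>X\<close>, write
  \<open>G = S u\<close> and test the two output laws against \<open>f = T\<^sup>* u\<close>. Its mean is \<open>E G(X) = 0\<close> under \<open>P\<^sub>Y\<close>
  and \<open>E G(X\<^sub>r)\<close> under \<open>P\<^sub>Y\<^sub>r\<close>, so Cauchy-Schwarz gives
  \<open>E[G(X\<^sub>r)]\<^sup>2 \<le> \<chi>\<^sup>2 \<langle>u, G\<rangle> \<le> \<chi>\<^sup>2 \<langle>G, G\<rangle> / \<lambda>(m) \<le> \<chi>\<^sup>2 (max G) E[G(X\<^sub>r)] / \<lambda>(m)\<close>.
  For \<open>G\<close> take the diagonal of the reproducing kernel of the polynomials of degree \<open>< L\<close> that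
  vanish at the \<open>K\<close> mass points: its mean is at least the dimension \<open>L - K\<close> of that space and it
  is bounded by \<open>2 L - 1\<close> on \<open>[0, 1]\<close>. With \<open>m = 2 L - 2\<close> this is the claim, because
  \<open>B\<^sub>n(L) = \<lambda>(2 L - 2) (L - K) / (2 L)\<close>.
\<close>

definition haversine :: "real \<Rightarrow> real" where
  "haversine t = (1 - cos t) / 2"

text \<open>Since \<open>haversine\<close> pushes the uniform law on \<open>[0, pi]\<close> forward to the arcsine law
  Beta(1/2,1/2), this is the expectation of \<open>poly p\<close> under the reference input.\<close>
definition arcsine_mean :: "real poly \<Rightarrow> real" where
  "arcsine_mean p = integral {0..pi} (\<lambda>t. poly p (haversine t)) / pi"

lemma haversine_bounds: "0 \<le> haversine t" "haversine t \<le> 1"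
  unfolding haversine_def using cos_le_one[of t] cos_ge_minus_one[of t] by auto

lemma integrable_poly_haversine: "(\<lambda>t. poly p (haversine t)) integrable_on {0..pi}"
  unfolding haversine_def by (intro integrable_continuous_real continuous_intros) auto

lemma arcsine_mean_add: "arcsine_mean (p + q) = arcsine_mean p + arcsine_mean q"
  unfolding arcsine_mean_def
  by (simp add: integral_add[OF integrable_poly_haversine integrable_poly_haversine]
      add_divide_distrib)

lemma arcsine_mean_diff: "arcsine_mean (p - q) = arcsine_mean p - arcsine_mean q"
  unfolding arcsine_mean_def
  by (simp add: integral_diff[OF integrable_poly_haversine integrable_poly_haversine]
      diff_divide_distrib)

lemma arcsine_mean_smult: "arcsine_mean (smult c p) = c * arcsine_mean p"
  unfolding arcsine_mean_def by simp

lemma arcsine_mean_0 [simp]: "arcsine_mean 0 = 0"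
  unfolding arcsine_mean_def by simp

lemma arcsine_mean_1 [simp]: "arcsine_mean 1 = 1"
  unfolding arcsine_mean_def by simp

lemma arcsine_mean_sum: "arcsine_mean (\<Sum>i\<in>A. f i) = (\<Sum>i\<in>A. arcsine_mean (f i))"
  by (induction A rule: infinite_finite_induct)
    (simp_all add: arcsine_mean_add)

lemma arcsine_mean_nonneg:
  assumes "\<And>x. 0 \<le> x \<Longrightarrow> x \<le> 1 \<Longrightarrow> 0 \<le> poly p x"
  shows "0 \<le> arcsine_mean p"
  unfolding arcsine_mean_def
  by (intro divide_nonneg_pos integral_nonneg integrable_poly_haversine assms haversine_bounds) auto

lemma arcsine_mean_mono:
  assumes "\<And>x. 0 \<le> x \<Longrightarrow> x \<le> 1 \<Longrightarrow> poly p x \<le> poly q x"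
  shows "arcsine_mean p \<le> arcsine_mean q"
  using arcsine_mean_nonneg[of "q - p"] assms by (simp add: arcsine_mean_diff)

lemma arcsine_mean_square_nonneg: "0 \<le> arcsine_mean (p * p)"
  by (rule arcsine_mean_nonneg) simp

lemma arcsine_mean_Cauchy_Schwarz:
  "(arcsine_mean (p * q))\<^sup>2 \<le> arcsine_mean (p * p) * arcsine_mean (q * q)"
proof -
  define A B C where "A = arcsine_mean (p * p)" and "B = arcsine_mean (p * q)"
    and "C = arcsine_mean (q * q)"
  have quadratic_nonneg: "0 \<le> A + 2 * s * B + s\<^sup>2 * C" for s
  proof -
    have "(p + smult s q) * (p + smult s q) = p * p + smult (2 * s) (p * q) + smult (s\<^sup>2) (q * q)"
      by (rule poly_ext) (simp add: algebra_simps power2_eq_square)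
    then show ?thesis
      using arcsine_mean_square_nonneg[of "p + smult s q"]
      by (simp add: A_def B_def C_def arcsine_mean_add arcsine_mean_smult)
  qed
  show ?thesis
  proof (cases "C = 0")
    case True
    have "B = 0"
    proof (rule ccontr)
      assume "B \<noteq> 0"
      then show False
        using quadratic_nonneg[of "- (A + 1) / (2 * B)"] True by (simp add: field_simps)
    qed
    then show ?thesis using True by (simp add: A_def B_def C_def)
  next
    case False
    then have "C > 0" using arcsine_mean_square_nonneg[of q] by (simp add: C_def)
    then have "0 \<le> A - B\<^sup>2 / C"
      using quadratic_nonneg[of "- B / C"] by (simp add: field_simps power2_eq_square)
    then show ?thesis using \<open>C > 0\<close> by (simp add: A_def B_def C_def field_simps)
  qed
qed

definition arcsine_moment :: "nat \<Rightarrow> nat \<Rightarrow> real" where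
  "arcsine_moment a b = arcsine_mean ([:0, 1:] ^ a * [:1, -1:] ^ b)"

lemma arcsine_moment_split:
  "arcsine_moment a b = arcsine_moment (Suc a) b + arcsine_moment a (Suc b)"
proof -
  have "([:0, 1:] :: real poly) ^ a * [:1, -1:] ^ b =
      [:0, 1:] ^ Suc a * [:1, -1:] ^ b + [:0, 1:] ^ a * [:1, -1:] ^ Suc b"
    by (rule poly_ext) (simp add: algebra_simps)
  then show ?thesis unfolding arcsine_moment_def by (simp only: arcsine_mean_add)
qed

lemma has_real_derivative_sin_haversine_powers:
  "((\<lambda>t. sin t * haversine t ^ a * (1 - haversine t) ^ b) has_real_derivative
     (2 * real a + 1) * haversine t ^ a * (1 - haversine t) ^ Suc b
     - (2 * real b + 1) * haversine t ^ Suc a * (1 - haversine t) ^ b) (at t)"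
proof -
  define x where "x = haversine t"
  have "4 * x * (1 - x) = 1 - (cos t)\<^sup>2"
    by (simp add: x_def haversine_def field_simps power2_eq_square)
  then have sin_sq: "(sin t)\<^sup>2 / 2 = 2 * x * (1 - x)"
    by (simp add: sin_squared_eq)
  have cos_eq: "cos t = (1 - x) - x"
    by (simp add: x_def haversine_def)
  have "((\<lambda>t. sin t * haversine t ^ a * (1 - haversine t) ^ b) has_real_derivative
      cos t * x ^ a * (1 - x) ^ b + (sin t)\<^sup>2 / 2 *
        (real a * x ^ (a - 1) * (1 - x) ^ b - real b * x ^ a * (1 - x) ^ (b - 1))) (at t)"
    unfolding x_def haversine_def
    by (rule derivative_eq_intros refl | simp)+ (simp add: field_simps power2_eq_square)
  also have "cos t * x ^ a * (1 - x) ^ b + (sin t)\<^sup>2 / 2 *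
        (real a * x ^ (a - 1) * (1 - x) ^ b - real b * x ^ a * (1 - x) ^ (b - 1)) =
      (2 * real a + 1) * x ^ a * (1 - x) ^ Suc b - (2 * real b + 1) * x ^ Suc a * (1 - x) ^ b"
    unfolding sin_sq cos_eq by (cases a; cases b) (simp_all add: algebra_simps)
  finally show ?thesis unfolding x_def .
qed

text \<open>Integration by parts against \<open>sin t\<close>, which vanishes at both ends of \<open>[0, pi]\<close>.\<close>
lemma arcsine_moment_parts:
  "(2 * real a + 1) * arcsine_moment a (Suc b) = (2 * real b + 1) * arcsine_moment (Suc a) b"
proof -
  define H :: "real poly" where "H = smult (2 * real a + 1) ([:0, 1:] ^ a * [:1, -1:] ^ Suc b)
      - smult (2 * real b + 1) ([:0, 1:] ^ Suc a * [:1, -1:] ^ b)"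
  define F where "F t = sin t * haversine t ^ a * (1 - haversine t) ^ b" for t
  have "((\<lambda>t. poly H (haversine t)) has_integral (F pi - F 0)) {0..pi}"
    using has_real_derivative_sin_haversine_powers
    by (intro fundamental_theorem_of_calculus)
      (auto simp: H_def F_def algebra_simps has_real_derivative_iff_has_vector_derivative[symmetric]
        intro: has_field_derivative_at_within)
  then have "arcsine_mean H = 0"
    by (simp add: arcsine_mean_def F_def integral_unique)
  moreover have "arcsine_mean H =
      (2 * real a + 1) * arcsine_moment a (Suc b) - (2 * real b + 1) * arcsine_moment (Suc a) b"
    unfolding H_def arcsine_moment_def by (simp only: arcsine_mean_diff arcsine_mean_smult)
  ultimately show ?thesis by simp
qed

lemma arcsine_moment_Suc_left:
  "arcsine_moment (Suc a) b = (2 * real a + 1) / (2 * real a + 2 * real b + 2) * arcsine_moment a b"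
  using arcsine_moment_split[of a b] arcsine_moment_parts[of a b] by (simp add: field_simps)

lemma arcsine_moment_Suc_right:
  "arcsine_moment a (Suc b) = (2 * real b + 1) / (2 * real a + 2 * real b + 2) * arcsine_moment a b"
  using arcsine_moment_split[of a b] arcsine_moment_parts[of a b] by (simp add: field_simps)

lemma Gamma_half_Suc: "Gamma (real (Suc k) + 1/2) = (real k + 1/2) * Gamma (real k + 1/2)"
proof -
  have "real k + 1/2 \<notin> \<int>\<^sub>\<le>\<^sub>0" by (auto dest: nonpos_Ints_nonpos)
  from Gamma_plus1[OF this] show ?thesis by (simp add: add_ac)
qed

lemma arcsine_moment_Gamma:
  "arcsine_moment a b = Gamma (real a + 1/2) * Gamma (real b + 1/2) / (pi * fact (a + b))"
proof (induction b)
  case 0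
  show ?case
  proof (induction a)
    case 0
    show ?case using Gamma_one_half_real by (simp add: arcsine_moment_def)
  next
    case (Suc a)
    show ?case
      unfolding arcsine_moment_Suc_left Suc.IH Gamma_half_Suc by (simp add: field_simps)
  qed
next
  case (Suc b)
  show ?case
    unfolding arcsine_moment_Suc_right Suc.IH Gamma_half_Suc by (simp add: field_simps)
qed

lemma arcsine_moment_pos: "0 < arcsine_moment a b"
  unfolding arcsine_moment_Gamma by (intro divide_pos_pos mult_pos_pos Gamma_real_pos) auto

definition bernstein_poly :: "nat \<Rightarrow> nat \<Rightarrow> real poly" where
  "bernstein_poly n k = smult (real (n choose k)) ([:0, 1:] ^ k * [:1, -1:] ^ (n - k))"

lemma poly_bernstein_poly: "poly (bernstein_poly n k) x = Bernstein n k x"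
  by (simp add: bernstein_poly_def Bernstein_def)

lemma arcsine_mean_bernstein_poly:
  "arcsine_mean (bernstein_poly n k) = real (n choose k) * arcsine_moment k (n - k)"
  by (simp add: bernstein_poly_def arcsine_moment_def arcsine_mean_smult)

lemma arcsine_mean_bernstein_poly_pos: "k \<le> n \<Longrightarrow> 0 < arcsine_mean (bernstein_poly n k)"
  by (simp add: arcsine_mean_bernstein_poly arcsine_moment_pos)

lemma ref_out_eq_arcsine_mean:
  assumes "k \<le> n"
  shows "ref_out n k = arcsine_mean (bernstein_poly n k)"
proof -
  have diff: "real n - real k = real (n - k)" using assms by simp
  have Gamma_nat: "Gamma (real m + 1) = fact m" for m
    using Gamma_fact[of m] by (simp add: add_ac)
  have choose: "real (n choose k) = fact n / (fact k * fact (n - k))"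
    using binomial_fact[OF assms] by simp
  show ?thesis
    unfolding ref_out_def diff Gamma_nat arcsine_mean_bernstein_poly arcsine_moment_Gamma choose
    using assms by simp
qed

lemma ref_out_pos: "k \<le> n \<Longrightarrow> 0 < ref_out n k"
  by (simp add: ref_out_eq_arcsine_mean arcsine_mean_bernstein_poly_pos)

lemma arcsine_mean_monom_bernstein_poly:
  assumes "k \<le> n"
  shows "arcsine_mean (monom 1 j * bernstein_poly n k) =
    (\<Prod>i<j. (real k + real i + 1/2) / (real n + real i + 1)) * arcsine_mean (bernstein_poly n k)"
proof -
  have "monom 1 j * bernstein_poly n k =
      smult (real (n choose k)) ([:0, 1:] ^ (k + j) * [:1, -1:] ^ (n - k))"
    by (rule poly_ext) (simp add: bernstein_poly_def poly_monom power_add)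
  moreover have "arcsine_moment (k + j) (n - k) =
      (\<Prod>i<j. (real k + real i + 1/2) / (real n + real i + 1)) * arcsine_moment k (n - k)"
  proof (induction j)
    case (Suc j)
    have "(2 * real (k + j) + 1) / (2 * real (k + j) + 2 * real (n - k) + 2) =
        (real k + real j + 1/2) / (real n + real j + 1)"
      using assms by (simp add: of_nat_diff field_simps)
    then show ?case
      using arcsine_moment_Suc_left[of "k + j" "n - k"] Suc.IH by simp
  qed simp
  ultimately show ?thesis
    by (simp add: arcsine_moment_def arcsine_mean_bernstein_poly arcsine_mean_smult)
qed

text \<open>\<open>poly (shifted_cheb k) x = T\<^sub>k (1 - 2 x)\<close> for the Chebyshev polynomials \<open>T\<^sub>k\<close>.\<close>
fun shifted_cheb :: "nat \<Rightarrow> real poly" where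
  "shifted_cheb 0 = 1"
| "shifted_cheb (Suc 0) = [:1, -2:]"
| "shifted_cheb (Suc (Suc k)) = smult 2 ([:1, -2:] * shifted_cheb (Suc k)) - shifted_cheb k"

lemma poly_shifted_cheb_haversine: "poly (shifted_cheb k) (haversine t) = cos (real k * t)"
proof (induction k rule: shifted_cheb.induct)
  case (3 k)
  have "real (Suc (Suc k)) * t = real (Suc k) * t + t" "real k * t = real (Suc k) * t - t"
    by (simp_all add: algebra_simps)
  then have "cos (real (Suc (Suc k)) * t) = 2 * cos t * cos (real (Suc k) * t) - cos (real k * t)"
    by (simp only: cos_add cos_diff) (simp add: algebra_simps)
  moreover have "poly [:1, -2:] (haversine t) = cos t"
    by (simp add: haversine_def field_simps)
  moreover have "poly (shifted_cheb (Suc (Suc k))) (haversine t) =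
      2 * poly [:1, -2:] (haversine t) * poly (shifted_cheb (Suc k)) (haversine t)
      - poly (shifted_cheb k) (haversine t)"
    by (simp only: shifted_cheb.simps poly_diff poly_smult poly_mult mult.assoc)
  ultimately show ?case
    using 3 by simp
qed (simp_all add: haversine_def field_simps)

lemma degree_shifted_cheb: "degree (shifted_cheb k) \<le> k"
proof (induction k rule: shifted_cheb.induct)
  case (3 k)
  have "degree ([:1, -2:] * shifted_cheb (Suc k)) \<le> Suc (Suc k)"
    using degree_mult_le[of "[:1, -2:]" "shifted_cheb (Suc k)"] 3 by simp
  then show ?case
    using 3 by (auto intro!: degree_diff_le order.trans[OF degree_smult_le])
qed simp_all

lemma coeff_shifted_cheb_self: "coeff (shifted_cheb k) k = (if k = 0 then 1 else (-4) ^ k / 2)"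
proof (induction k rule: shifted_cheb.induct)
  case (3 k)
  have "coeff (shifted_cheb k) (Suc (Suc k)) = 0" "coeff (shifted_cheb (Suc k)) (Suc (Suc k)) = 0"
    using degree_shifted_cheb[of k] degree_shifted_cheb[of "Suc k"] by (simp_all add: coeff_eq_0)
  then show ?case
    using 3 by (simp add: mult_pCons_left)
qed simp_all

lemma abs_poly_shifted_cheb_le_1:
  assumes "0 \<le> x" "x \<le> 1"
  shows "\<bar>poly (shifted_cheb k) x\<bar> \<le> 1"
proof -
  have "haversine (arccos (1 - 2 * x)) = x"
    using assms by (simp add: haversine_def cos_arccos)
  then show ?thesis
    using poly_shifted_cheb_haversine[of k "arccos (1 - 2 * x)"] by simp
qed

lemma has_integral_cos_int_multiple:
  "((\<lambda>t. cos (real_of_int m * t)) has_integral (if m = 0 then pi else 0)) {0..pi}"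
proof (cases "m = 0")
  case False
  define F where "F t = sin (real_of_int m * t) / real_of_int m" for t
  have "((\<lambda>t. cos (real_of_int m * t)) has_integral (F pi - F 0)) {0..pi}"
    using False unfolding F_def
    by (intro fundamental_theorem_of_calculus)
      (auto intro!: derivative_eq_intros
        simp: has_real_derivative_iff_has_vector_derivative[symmetric])
  then show ?thesis
    using False by (simp add: F_def mult.commute)
qed (use has_integral_const_real[of "1::real" 0 pi] in simp)

lemma arcsine_mean_shifted_cheb_mult:
  "arcsine_mean (shifted_cheb j * shifted_cheb k) = (if j = k then if k = 0 then 1 else 1/2 else 0)"
proof -
  have "cos (real j * t) * cos (real k * t) =
      (cos (real_of_int (int j - int k) * t) + cos (real_of_int (int j + int k) * t)) / 2" for t
    using cos_add[of "real j * t" "real k * t"] cos_diff[of "real j * t" "real k * t"]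
    by (simp add: algebra_simps)
  then have "((\<lambda>t. poly (shifted_cheb j * shifted_cheb k) (haversine t)) has_integral
      ((if int j - int k = 0 then pi else 0) + (if int j + int k = 0 then pi else 0)) / 2) {0..pi}"
    unfolding poly_mult poly_shifted_cheb_haversine
    by (simp only:) (intro has_integral_divide has_integral_add has_integral_cos_int_multiple)
  then show ?thesis
    by (auto simp: arcsine_mean_def integral_unique)
qed

lemma arcsine_mean_shifted_cheb_square_pos: "0 < arcsine_mean (shifted_cheb k * shifted_cheb k)"
  by (simp add: arcsine_mean_shifted_cheb_mult)

lemma shifted_cheb_span: "degree u \<le> k \<Longrightarrow> \<exists>a. u = (\<Sum>j\<le>k. smult (a j) (shifted_cheb j))"
proof (induction k arbitrary: u)
  case 0
  then have "u = smult (coeff u 0) (shifted_cheb 0)"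
    by (simp add: degree_0_id)
  then show ?case by auto
next
  case (Suc k)
  define c where "c = coeff u (Suc k) / coeff (shifted_cheb (Suc k)) (Suc k)"
  have "degree (u - smult c (shifted_cheb (Suc k))) \<le> k"
  proof (rule degree_le, intro allI impI)
    fix i assume "k < i"
    then consider "i = Suc k" | "Suc k < i" by linarith
    then show "coeff (u - smult c (shifted_cheb (Suc k))) i = 0"
    proof cases
      case 1
      then show ?thesis by (simp add: c_def coeff_shifted_cheb_self)
    next
      case 2
      then show ?thesis
        using Suc.prems degree_shifted_cheb[of "Suc k"] by (simp add: coeff_eq_0)
    qed
  qed
  then obtain a where "u - smult c (shifted_cheb (Suc k)) = (\<Sum>j\<le>k. smult (a j) (shifted_cheb j))"
    using Suc.IH by blast
  then have "u = (\<Sum>j\<le>Suc k. smult ((a(Suc k := c)) j) (shifted_cheb j))"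
    by (simp add: algebra_simps)
  then show ?case by blast
qed

lemma arcsine_mean_shifted_cheb_expansion:
  assumes "i \<le> m"
  shows "arcsine_mean (shifted_cheb i * (\<Sum>j\<le>m. smult (a j) (shifted_cheb j))) =
    a i * arcsine_mean (shifted_cheb i * shifted_cheb i)"
proof -
  have "arcsine_mean (shifted_cheb i * (\<Sum>j\<le>m. smult (a j) (shifted_cheb j))) =
      (\<Sum>j\<le>m. a j * arcsine_mean (shifted_cheb i * shifted_cheb j))"
    by (simp add: sum_distrib_left arcsine_mean_sum arcsine_mean_smult)
  also have "\<dots> = (\<Sum>j\<le>m. if j = i then a i * arcsine_mean (shifted_cheb i * shifted_cheb i) else 0)"
    by (rule sum.cong) (auto simp: arcsine_mean_shifted_cheb_mult)
  finally show ?thesis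
    using assms by simp
qed

lemma arcsine_mean_shifted_cheb_expansions:
  "arcsine_mean ((\<Sum>j\<le>m. smult (a j) (shifted_cheb j)) * (\<Sum>j\<le>m. smult (b j) (shifted_cheb j))) =
    (\<Sum>j\<le>m. a j * b j * arcsine_mean (shifted_cheb j * shifted_cheb j))"
  by (simp add: sum_distrib_right arcsine_mean_sum arcsine_mean_smult
      arcsine_mean_shifted_cheb_expansion mult.assoc)

lemma arcsine_mean_shifted_cheb_orth:
  assumes "degree v < k"
  shows "arcsine_mean (shifted_cheb k * v) = 0"
proof -
  have "degree v \<le> k - 1"
    using assms by simp
  then obtain a where "v = (\<Sum>j\<le>k - 1. smult (a j) (shifted_cheb j))"
    using shifted_cheb_span by blast
  moreover have "arcsine_mean (shifted_cheb k * shifted_cheb j) = 0" if "j \<le> k - 1" for j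
    using that assms by (simp add: arcsine_mean_shifted_cheb_mult)
  ultimately show ?thesis
    by (simp add: sum_distrib_left arcsine_mean_sum arcsine_mean_smult)
qed

lemma shifted_cheb_orth_eq_0:
  assumes "degree D \<le> m" "\<And>i. i \<le> m \<Longrightarrow> arcsine_mean (shifted_cheb i * D) = 0"
  shows "D = 0"
proof -
  obtain a where D: "D = (\<Sum>j\<le>m. smult (a j) (shifted_cheb j))"
    using shifted_cheb_span[OF assms(1)] by blast
  have "a i = 0" if "i \<le> m" for i
    using assms(2)[OF that] arcsine_mean_shifted_cheb_square_pos[of i]
    unfolding D arcsine_mean_shifted_cheb_expansion[OF that] by simp
  then show ?thesis
    unfolding D by simp
qed

definition bernstein_op :: "nat \<Rightarrow> (nat \<Rightarrow> real) \<Rightarrow> real poly" where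
  "bernstein_op n h = (\<Sum>k\<le>n. smult (h k) (bernstein_poly n k))"

lemma poly_bernstein_op: "poly (bernstein_op n h) x = (\<Sum>k\<le>n. h k * Bernstein n k x)"
  by (simp add: bernstein_op_def poly_sum poly_bernstein_poly)

lemma bernstein_op_cong: "(\<And>k. k \<le> n \<Longrightarrow> f k = g k) \<Longrightarrow> bernstein_op n f = bernstein_op n g"
  unfolding bernstein_op_def by (rule sum.cong) auto

lemma bernstein_op_add: "bernstein_op n (\<lambda>k. f k + g k) = bernstein_op n f + bernstein_op n g"
  by (simp add: bernstein_op_def smult_add_left sum.distrib)

lemma bernstein_op_const: "bernstein_op n (\<lambda>k. c) = [:c:]"
  by (rule poly_ext) (simp add: poly_bernstein_op flip: sum_distrib_left)

lemma Suc_mult_Bernstein_Suc: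
  "real (Suc k) * Bernstein (Suc n) (Suc k) x = real (Suc n) * x * Bernstein n k x"
proof -
  have binomial: "real (Suc k) * real (Suc n choose Suc k) = real (Suc n) * real (n choose k)"
    using Suc_times_binomial_eq[of n k] by (simp only: of_nat_mult[symmetric] mult.commute)
  have "real (Suc k) * Bernstein (Suc n) (Suc k) x =
      (real (Suc k) * real (Suc n choose Suc k)) * (x * x ^ k * (1 - x) ^ (n - k))"
    by (simp add: Bernstein_def mult_ac)
  also have "\<dots> = real (Suc n) * x * Bernstein n k x"
    unfolding binomial by (simp add: Bernstein_def mult_ac)
  finally show ?thesis .
qed

lemma bernstein_op_index_mult:
  "bernstein_op (Suc n) (\<lambda>k. real k * h k) =
    smult (real (Suc n)) (pCons 0 (bernstein_op n (\<lambda>k. h (Suc k))))"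
proof (rule poly_ext)
  fix x :: real
  have "poly (bernstein_op (Suc n) (\<lambda>k. real k * h k)) x =
      (\<Sum>k\<le>n. h (Suc k) * (real (Suc k) * Bernstein (Suc n) (Suc k) x))"
    unfolding poly_bernstein_op by (subst sum.atMost_Suc_shift) (simp add: mult_ac)
  also have "\<dots> = real (Suc n) * x * (\<Sum>k\<le>n. h (Suc k) * Bernstein n k x)"
    by (simp only: Suc_mult_Bernstein_Suc) (simp add: sum_distrib_left mult_ac)
  finally show "poly (bernstein_op (Suc n) (\<lambda>k. real k * h k)) x =
      poly (smult (real (Suc n)) (pCons 0 (bernstein_op n (\<lambda>k. h (Suc k))))) x"
    by (simp add: poly_bernstein_op)
qed

lemma coeff_pcompose_shift:
  fixes q :: "'a::idom poly"
  assumes "degree q \<le> k"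
  shows "coeff (pcompose q [:c, 1:]) k = coeff q k"
proof (cases "degree q = k")
  case True
  then show ?thesis
    using lead_coeff_comp[of "[:c, 1:]" q] by (simp add: degree_pcompose)
next
  case False
  then show ?thesis
    using assms by (simp add: degree_pcompose coeff_eq_0)
qed

lemma bernstein_op_poly:
  assumes "degree q \<le> k"
  shows "degree (bernstein_op n (\<lambda>j. poly q (real j))) \<le> k \<and>
    coeff (bernstein_op n (\<lambda>j. poly q (real j))) k = (\<Prod>i<k. real n - real i) * coeff q k"
  using assms
proof (induction k arbitrary: n q)
  case 0
  then obtain c where "q = [:c:]"
    by (metis degree_0_id le_zero_eq)
  then show ?case
    by (simp add: bernstein_op_const)
next
  case (Suc k)
  obtain c q1 where q: "q = pCons c q1"
    by (cases q)
  have deg_q1: "degree q1 \<le> k"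
    using Suc.prems q by (cases "q1 = 0") auto
  have split: "bernstein_op n (\<lambda>j. poly q (real j)) =
      [:c:] + bernstein_op n (\<lambda>j. real j * poly q1 (real j))"
    unfolding q by (simp add: bernstein_op_add bernstein_op_const)
  show ?case
  proof (cases n)
    case 0
    then show ?thesis
      using split by (auto simp: bernstein_op_def bernstein_poly_def prod.lessThan_Suc_shift)
  next
    case (Suc m)
    let ?B = "bernstein_op m (\<lambda>j. poly (pcompose q1 [:1, 1:]) (real j))"
    have "degree ?B \<le> k" "coeff ?B k = (\<Prod>i<k. real m - real i) * coeff q1 k"
      using Suc.IH[of "pcompose q1 [:1, 1:]" m] deg_q1 coeff_pcompose_shift[OF deg_q1]
      by (simp_all add: degree_pcompose)
    moreover have "bernstein_op n (\<lambda>j. real j * poly q1 (real j)) = smult (real n) (pCons 0 ?B)"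
      unfolding Suc bernstein_op_index_mult by (simp add: poly_pcompose)
    moreover have "(\<Prod>i<Suc k. real n - real i) = real n * (\<Prod>i<k. real m - real i)"
      unfolding Suc by (subst prod.lessThan_Suc_shift) simp
    ultimately show ?thesis
      using q unfolding split
      by (auto intro!: degree_add_le order.trans[OF degree_smult_le] simp: degree_pCons_eq_if)
  qed
qed

text \<open>\<open>bernstein_gram n = T T\<^sup>*\<close> with \<open>T = bernstein_op n\<close> and \<open>T\<^sup>* u k = E[u b\<^sub>k] / E[b\<^sub>k]\<close>.\<close>
definition bernstein_gram :: "nat \<Rightarrow> real poly \<Rightarrow> real poly" where
  "bernstein_gram n u =
    bernstein_op n (\<lambda>k. arcsine_mean (u * bernstein_poly n k) / arcsine_mean (bernstein_poly n k))"

definition gram_eigenvalue :: "nat \<Rightarrow> nat \<Rightarrow> real" where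
  "gram_eigenvalue n k = (\<Prod>i<k. (real n - real i) / (real n + real i + 1))"

lemma bernstein_gram_add: "bernstein_gram n (u + v) = bernstein_gram n u + bernstein_gram n v"
  by (simp add: bernstein_gram_def distrib_right arcsine_mean_add add_divide_distrib
      bernstein_op_add)

lemma bernstein_gram_smult: "bernstein_gram n (smult c u) = smult c (bernstein_gram n u)"
  by (rule poly_ext)
    (simp add: bernstein_gram_def poly_bernstein_op arcsine_mean_smult sum_distrib_left mult.assoc)

lemma bernstein_gram_sum: "bernstein_gram n (\<Sum>i\<in>A. f i) = (\<Sum>i\<in>A. bernstein_gram n (f i))"
  by (induction A rule: infinite_finite_induct)
    (simp_all add: bernstein_gram_add bernstein_gram_smult[of n 0 0, simplified])

lemma bernstein_gram_monom:
  "bernstein_gram n (monom 1 j) = bernstein_op n (\<lambda>k. poly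
     (smult (1 / (\<Prod>i<j. real n + real i + 1)) (\<Prod>i<j. [:real i + 1/2, 1:])) (real k))"
  unfolding bernstein_gram_def
proof (rule bernstein_op_cong)
  fix k assume "k \<le> n"
  then have "arcsine_mean (bernstein_poly n k) \<noteq> 0"
    using arcsine_mean_bernstein_poly_pos[of k n] by simp
  with \<open>k \<le> n\<close> show
    "arcsine_mean (monom 1 j * bernstein_poly n k) / arcsine_mean (bernstein_poly n k) =
      poly (smult (1 / (\<Prod>i<j. real n + real i + 1)) (\<Prod>i<j. [:real i + 1/2, 1:])) (real k)"
    by (simp add: arcsine_mean_monom_bernstein_poly poly_prod prod_dividef add_ac)
qed

lemma bernstein_gram_monom_degree:
  "degree (bernstein_gram n (monom 1 j)) \<le> j \<and>
    coeff (bernstein_gram n (monom 1 j)) j = gram_eigenvalue n j"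
proof -
  let ?P = "\<Prod>i<j. [:real i + 1/2, 1:] :: real poly"
  have "degree ?P = j" "coeff ?P j = 1"
    using degree_prod_eq_sum_degree[of "{..<j}" "\<lambda>i. [:real i + 1/2, 1:]"]
      lead_coeff_prod[of "\<lambda>i. [:real i + 1/2, 1:]" "{..<j}"]
    by simp_all
  then show ?thesis
    unfolding bernstein_gram_monom gram_eigenvalue_def
    using bernstein_op_poly[of "smult (1 / (\<Prod>i<j. real n + real i + 1)) ?P" j n]
    by (simp add: prod_dividef)
qed

lemma bernstein_gram_degree:
  assumes "degree u \<le> k"
  shows "degree (bernstein_gram n u) \<le> k \<and>
    coeff (bernstein_gram n u) k = gram_eigenvalue n k * coeff u k"
proof -
  have "u = (\<Sum>j\<le>k. smult (coeff u j) (monom 1 j))"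
    using poly_as_sum_of_monoms'[OF assms] by (simp add: smult_monom)
  then have "bernstein_gram n u = bernstein_gram n (\<Sum>j\<le>k. smult (coeff u j) (monom 1 j))"
    by (rule arg_cong)
  then have S: "bernstein_gram n u = (\<Sum>j\<le>k. smult (coeff u j) (bernstein_gram n (monom 1 j)))"
    by (simp only: bernstein_gram_sum bernstein_gram_smult)
  have "degree (bernstein_gram n (monom 1 j)) \<le> k" if "j \<le> k" for j
    using bernstein_gram_monom_degree[of n j] that by linarith
  then have "degree (bernstein_gram n u) \<le> k"
    unfolding S by (intro degree_sum_le) (auto intro: order.trans[OF degree_smult_le])
  moreover have "coeff (bernstein_gram n (monom 1 j)) k = 0" if "j < k" for j
    using bernstein_gram_monom_degree[of n j] that by (simp add: coeff_eq_0)
  then have "coeff (bernstein_gram n u) k =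
      coeff (smult (coeff u k) (bernstein_gram n (monom 1 k))) k"
    unfolding S coeff_sum by (subst sum.remove[of _ k]) (auto intro!: sum.neutral)
  ultimately show ?thesis
    using bernstein_gram_monom_degree[of n k] by simp
qed

lemma arcsine_mean_bernstein_gram_mult:
  "arcsine_mean (bernstein_gram n u * v) = (\<Sum>k\<le>n.
     arcsine_mean (u * bernstein_poly n k) * arcsine_mean (v * bernstein_poly n k)
     / arcsine_mean (bernstein_poly n k))"
  by (simp add: bernstein_gram_def bernstein_op_def sum_distrib_left arcsine_mean_sum
      arcsine_mean_smult mult.commute[of _ v])

lemma bernstein_gram_self_adjoint:
  "arcsine_mean (bernstein_gram n u * v) = arcsine_mean (u * bernstein_gram n v)"
proof -
  have "arcsine_mean (u * bernstein_gram n v) = arcsine_mean (bernstein_gram n v * u)"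
    by (simp only: mult.commute)
  also have "\<dots> = (\<Sum>k\<le>n.
      arcsine_mean (v * bernstein_poly n k) * arcsine_mean (u * bernstein_poly n k)
      / arcsine_mean (bernstein_poly n k))"
    by (rule arcsine_mean_bernstein_gram_mult)
  also have "\<dots> = arcsine_mean (bernstein_gram n u * v)"
    by (simp only: arcsine_mean_bernstein_gram_mult) (simp add: ac_simps)
  finally show ?thesis ..
qed

lemma gram_eigenvalue_Suc:
  "gram_eigenvalue n (Suc k) = gram_eigenvalue n k * ((real n - real k) / (real n + real k + 1))"
  by (simp add: gram_eigenvalue_def)

lemma gram_eigenvalue_pos: "k \<le> n \<Longrightarrow> 0 < gram_eigenvalue n k"
  unfolding gram_eigenvalue_def by (intro prod_pos) auto

lemma gram_eigenvalue_antimono: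
  assumes "j \<le> k" "k \<le> n"
  shows "gram_eigenvalue n k \<le> gram_eigenvalue n j"
  using assms
proof (induction k rule: dec_induct)
  case (step m)
  have "gram_eigenvalue n (Suc m) \<le> gram_eigenvalue n m"
    unfolding gram_eigenvalue_Suc using gram_eigenvalue_pos[of m n] step.hyps step.prems
    by (intro mult_left_le) auto
  then show ?case
    using step by simp
qed simp

text \<open>A self-adjoint operator that preserves degrees and acts triangularly on the monomial basis
  is diagonal in every orthogonal polynomial basis.\<close>
lemma bernstein_gram_shifted_cheb:
  "bernstein_gram n (shifted_cheb k) = smult (gram_eigenvalue n k) (shifted_cheb k)"
proof -
  define D where
    "D = bernstein_gram n (shifted_cheb k) - smult (gram_eigenvalue n k) (shifted_cheb k)"
  have "degree D \<le> k" "coeff D k = 0"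
    using bernstein_gram_degree[OF degree_shifted_cheb[of k], of n] degree_shifted_cheb[of k]
    by (auto simp: D_def intro: degree_diff_le order.trans[OF degree_smult_le])
  have "D = 0"
  proof (rule ccontr)
    assume "D \<noteq> 0"
    with \<open>degree D \<le> k\<close> \<open>coeff D k = 0\<close> have "degree D < k"
      by (metis le_neq_implies_less leading_coeff_0_iff)
    then have "degree D \<le> k - 1"
      by simp
    moreover have "arcsine_mean (shifted_cheb i * D) = 0" if "i \<le> k - 1" for i
    proof -
      have "degree (bernstein_gram n (shifted_cheb i)) < k"
        using bernstein_gram_degree[OF degree_shifted_cheb[of i], of n] that \<open>degree D < k\<close>
        by linarith
      then have "arcsine_mean (shifted_cheb i * bernstein_gram n (shifted_cheb k)) = 0"
        using bernstein_gram_self_adjoint[of n "shifted_cheb i" "shifted_cheb k"]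
          arcsine_mean_shifted_cheb_orth by (simp add: mult.commute)
      then show ?thesis
        using that \<open>degree D < k\<close>
        by (simp add: D_def algebra_simps arcsine_mean_diff arcsine_mean_smult
            arcsine_mean_shifted_cheb_mult)
    qed
    ultimately show False
      using shifted_cheb_orth_eq_0 \<open>D \<noteq> 0\<close> by blast
  qed
  then show ?thesis
    by (simp add: D_def)
qed

lemma bernstein_gram_preimage:
  assumes "degree G \<le> m" "m \<le> n"
  shows "\<exists>u. bernstein_gram n u = G \<and>
    gram_eigenvalue n m * arcsine_mean (u * G) \<le> arcsine_mean (G * G)"
proof -
  obtain g where G: "G = (\<Sum>j\<le>m. smult (g j) (shifted_cheb j))"
    using shifted_cheb_span[OF assms(1)] by blast
  define u where "u = (\<Sum>j\<le>m. smult (g j / gram_eigenvalue n j) (shifted_cheb j))"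
  have pos: "0 < gram_eigenvalue n j" if "j \<le> m" for j
    using gram_eigenvalue_pos that assms(2) by simp
  have "bernstein_gram n u = G"
    unfolding u_def G using pos
    by (auto simp: bernstein_gram_sum bernstein_gram_smult bernstein_gram_shifted_cheb
        less_imp_neq[symmetric] intro!: sum.cong)
  moreover have "gram_eigenvalue n m * arcsine_mean (u * G) \<le> arcsine_mean (G * G)"
  proof -
    have "gram_eigenvalue n m *
        (g j / gram_eigenvalue n j * g j * arcsine_mean (shifted_cheb j * shifted_cheb j))
        \<le> g j * g j * arcsine_mean (shifted_cheb j * shifted_cheb j)" if "j \<le> m" for j
    proof -
      have ratio: "gram_eigenvalue n m / gram_eigenvalue n j \<le> 1"
        using gram_eigenvalue_antimono[OF that assms(2)] pos[OF that] by simp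
      have "0 \<le> g j * g j * arcsine_mean (shifted_cheb j * shifted_cheb j)"
        using arcsine_mean_shifted_cheb_square_pos[of j] by simp
      from mult_right_mono[OF ratio this] show ?thesis
        by (simp add: field_simps)
    qed
    then show ?thesis
      unfolding u_def G arcsine_mean_shifted_cheb_expansions
      by (auto simp: sum_distrib_left intro!: sum_mono)
  qed
  ultimately show ?thesis
    by blast
qed

text \<open>\<open>K\<close> is the reproducing kernel, for the inner product \<open>arcsine_mean (p * q)\<close>, of some
  space of polynomials of degree at most \<open>d\<close>; the section \<open>K x\<close> represents evaluation at \<open>x\<close>.\<close>
definition reproducing_kernel :: "nat \<Rightarrow> (real \<Rightarrow> real poly) \<Rightarrow> bool" where
  "reproducing_kernel d K \<longleftrightarrow> (\<forall>x. degree (K x) \<le> d) \<and> (\<forall>x y. poly (K x) y = poly (K y) x) \<and>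
     (\<forall>x y. arcsine_mean (K x * K y) = poly (K x) y)"

definition cheb_kernel :: "nat \<Rightarrow> real \<Rightarrow> real poly" where
  "cheb_kernel d x = (\<Sum>k\<le>d.
     smult (poly (shifted_cheb k) x / arcsine_mean (shifted_cheb k * shifted_cheb k))
       (shifted_cheb k))"

lemma reproducing_kernel_cheb_kernel: "reproducing_kernel d (cheb_kernel d)"
  unfolding reproducing_kernel_def
proof (intro conjI allI)
  fix x y
  show "degree (cheb_kernel d x) \<le> d"
    unfolding cheb_kernel_def using degree_shifted_cheb
    by (intro degree_sum_le) (auto intro: order.trans[OF degree_smult_le] order.trans)
  show "poly (cheb_kernel d x) y = poly (cheb_kernel d y) x"
    by (simp add: cheb_kernel_def poly_sum mult.commute)
  show "arcsine_mean (cheb_kernel d x * cheb_kernel d y) = poly (cheb_kernel d x) y"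
    unfolding cheb_kernel_def arcsine_mean_shifted_cheb_expansions
    using arcsine_mean_shifted_cheb_square_pos by (simp add: poly_sum less_imp_neq[symmetric])
qed

lemma reproducing_kernel_diag_nonneg: "reproducing_kernel d K \<Longrightarrow> 0 \<le> poly (K x) x"
  unfolding reproducing_kernel_def using arcsine_mean_square_nonneg by metis

lemma reproducing_kernel_diag_eq_0:
  assumes K: "reproducing_kernel d K" and "poly (K a) a = 0"
  shows "K a = 0"
proof (rule poly_ext)
  fix y
  have "(poly (K y) a)\<^sup>2 \<le> poly (K y) y * poly (K a) a"
    using arcsine_mean_Cauchy_Schwarz[of "K y" "K a"] K by (simp add: reproducing_kernel_def)
  then show "poly (K a) y = poly 0 y"
    using assms K by (simp add: reproducing_kernel_def)
qed

text \<open>Projecting out the evaluation at \<open>a\<close>: the kernel of the subspace of functions vanishing at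
  \<open>a\<close>.\<close>
lemma reproducing_kernel_project:
  assumes K: "reproducing_kernel d K" and c: "0 < poly (K a) a"
  shows "reproducing_kernel d (\<lambda>x. K x - smult (poly (K x) a / poly (K a) a) (K a))"
proof -
  define c where "c = poly (K a) a"
  have sym: "poly (K x) y = poly (K y) x" and rep: "arcsine_mean (K x * K y) = poly (K x) y" for x y
    using K by (simp_all add: reproducing_kernel_def)
  have "degree (K x - smult (poly (K x) a / c) (K a)) \<le> d" for x
    using K
    by (auto simp: reproducing_kernel_def intro: degree_diff_le order.trans[OF degree_smult_le])
  moreover have "arcsine_mean
      ((K x - smult (poly (K x) a / c) (K a)) * (K y - smult (poly (K y) a / c) (K a))) =
      poly (K x) y - poly (K x) a * poly (K a) y / c" for x y
  proof -
    have "(K x - smult (poly (K x) a / c) (K a)) * (K y - smult (poly (K y) a / c) (K a)) =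
        K x * K y - smult (poly (K y) a / c) (K x * K a) - smult (poly (K x) a / c) (K a * K y)
        + smult (poly (K x) a / c * (poly (K y) a / c)) (K a * K a)"
      by (simp add: algebra_simps)
    then show ?thesis
      using c sym[of y a] sym[of x a]
      by (simp add: arcsine_mean_add arcsine_mean_diff arcsine_mean_smult rep c_def field_simps
          power2_eq_square)
  qed
  ultimately show ?thesis
    unfolding reproducing_kernel_def c_def[symmetric] using sym by (simp add: mult.commute)
qed

lemma sum_inverse_arcsine_mean_shifted_cheb_square:
  "(\<Sum>k\<le>d. 1 / arcsine_mean (shifted_cheb k * shifted_cheb k)) = 2 * real d + 1"
  by (induction d) (simp_all add: arcsine_mean_shifted_cheb_mult)

text \<open>\<open>K\<close> is the kernel of the polynomials of degree at most \<open>d\<close> vanishing on \<open>A\<close>, and \<open>g\<close>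
  its diagonal (the reciprocal Christoffel function) as a polynomial. Its trace is at least the
  dimension \<open>d + 1 - card A\<close> of that space, and imposing zeros only decreases the diagonal, so
  it stays below its unconstrained value \<open>2 d + 1\<close>.\<close>
definition vanishing_kernel :: "nat \<Rightarrow> real set \<Rightarrow> (real \<Rightarrow> real poly) \<Rightarrow> real poly \<Rightarrow> bool" where
  "vanishing_kernel d A K g \<longleftrightarrow> reproducing_kernel d K \<and> (\<forall>a\<in>A. K a = 0) \<and> degree g \<le> 2 * d \<and>
     (\<forall>x. poly g x = poly (K x) x) \<and> real d + 1 - real (card A) \<le> arcsine_mean g \<and>
     (\<forall>x. 0 \<le> x \<longrightarrow> x \<le> 1 \<longrightarrow> poly g x \<le> 2 * real d + 1)"

lemma vanishing_kernel_empty: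
  "vanishing_kernel d {} (cheb_kernel d)
     (\<Sum>k\<le>d. smult (1 / arcsine_mean (shifted_cheb k * shifted_cheb k))
       (shifted_cheb k * shifted_cheb k))"
proof -
  define N where "N k = arcsine_mean (shifted_cheb k * shifted_cheb k)" for k
  define g where "g = (\<Sum>k\<le>d. smult (1 / N k) (shifted_cheb k * shifted_cheb k))"
  have N_pos: "0 < N k" for k
    by (simp add: N_def arcsine_mean_shifted_cheb_square_pos)
  have "degree (shifted_cheb k * shifted_cheb k) \<le> 2 * d" if "k \<le> d" for k
    using degree_mult_le[of "shifted_cheb k" "shifted_cheb k"] degree_shifted_cheb[of k] that
    by simp
  then have "degree g \<le> 2 * d"
    unfolding g_def by (intro degree_sum_le) (auto intro: order.trans[OF degree_smult_le])
  moreover have "poly g x \<le> 2 * real d + 1" if "0 \<le> x" "x \<le> 1" for x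
  proof -
    have "(poly (shifted_cheb k) x)\<^sup>2 \<le> 1" for k
      using abs_poly_shifted_cheb_le_1[OF that, of k] by (simp add: abs_square_le_1)
    then have "poly g x \<le> (\<Sum>k\<le>d. 1 / N k)"
      unfolding g_def poly_sum poly_smult poly_mult using N_pos
      by (intro sum_mono mult_left_le) (simp_all add: less_imp_le power2_eq_square)
    then show ?thesis
      using sum_inverse_arcsine_mean_shifted_cheb_square by (simp add: N_def)
  qed
  moreover have "arcsine_mean g = real d + 1"
    using N_pos
    by (simp add: g_def arcsine_mean_sum arcsine_mean_smult N_def[symmetric]
        less_imp_neq[symmetric])
  moreover have "poly g x = poly (cheb_kernel d x) x" for x
    by (simp add: g_def N_def cheb_kernel_def poly_sum)
  ultimately show ?thesis
    using reproducing_kernel_cheb_kernel by (simp add: vanishing_kernel_def g_def N_def)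
qed

lemma vanishing_kernel_project:
  assumes Kg: "vanishing_kernel d A K g" and "finite A" "a \<notin> A" and "0 < poly (K a) a"
  defines "c \<equiv> poly (K a) a"
  shows "vanishing_kernel d (insert a A)
    (\<lambda>x. K x - smult (poly (K x) a / c) (K a)) (g - smult (1 / c) (K a * K a))"
proof -
  have K: "reproducing_kernel d K" and "degree g \<le> 2 * d"
    using Kg by (simp_all add: vanishing_kernel_def)
  have sym: "poly (K x) y = poly (K y) x" and rep: "arcsine_mean (K x * K y) = poly (K x) y"
    and "degree (K x) \<le> d" for x y
    using K by (simp_all add: reproducing_kernel_def)
  have "degree (K a * K a) \<le> 2 * d"
    using degree_mult_le[of "K a" "K a"] \<open>degree (K a) \<le> d\<close> by linarith
  then have "degree (g - smult (1 / c) (K a * K a)) \<le> 2 * d"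
    using \<open>degree g \<le> 2 * d\<close> by (auto intro!: degree_diff_le order.trans[OF degree_smult_le])
  moreover have "arcsine_mean (g - smult (1 / c) (K a * K a)) = arcsine_mean g - 1"
    using assms(4) by (simp add: arcsine_mean_diff arcsine_mean_smult rep c_def)
  moreover have "poly (g - smult (1 / c) (K a * K a)) x \<le> 2 * real d + 1"
    if "0 \<le> x" "x \<le> 1" for x
  proof -
    have "poly (g - smult (1 / c) (K a * K a)) x \<le> poly g x"
      using assms(4) by (simp add: c_def)
    then show ?thesis
      using Kg that by (auto simp: vanishing_kernel_def)
  qed
  moreover have "real (card (insert a A)) = real (card A) + 1"
    using assms(2,3) by simp
  ultimately show ?thesis
    using Kg reproducing_kernel_project[OF K assms(4)] assms(4) sym
    unfolding vanishing_kernel_def c_def by auto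
qed

lemma vanishing_kernel_insert:
  assumes Kg: "vanishing_kernel d A K g" and "finite A" "a \<notin> A"
  shows "\<exists>K' g'. vanishing_kernel d (insert a A) K' g'"
proof -
  have K: "reproducing_kernel d K"
    using Kg by (simp add: vanishing_kernel_def)
  show ?thesis
  proof (cases "poly (K a) a = 0")
    case True
    then have "K a = 0"
      using reproducing_kernel_diag_eq_0[OF K] by blast
    moreover have "real (card (insert a A)) = real (card A) + 1"
      using assms(2,3) by simp
    ultimately show ?thesis
      using Kg unfolding vanishing_kernel_def by (intro exI[of _ K] exI[of _ g]) auto
  next
    case False
    then have "0 < poly (K a) a"
      using reproducing_kernel_diag_nonneg[OF K] by (simp add: order_le_neq_trans)
    then show ?thesis
      using vanishing_kernel_project[OF assms] by blast
  qed
qed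

lemma vanishing_kernel_exists: "finite A \<Longrightarrow> \<exists>K g. vanishing_kernel d A K g"
proof (induction A rule: finite_induct)
  case empty
  then show ?case
    using vanishing_kernel_empty by blast
next
  case (insert a A)
  then show ?case
    using vanishing_kernel_insert by blast
qed

lemma chi2_nonneg: "(\<And>y. y \<le> n \<Longrightarrow> 0 < Q y) \<Longrightarrow> 0 \<le> chi2 n P Q"
  unfolding chi2_def by (intro sum_nonneg) (simp add: less_imp_le)

lemma Cauchy_Schwarz_chi2:
  assumes "\<And>y. y \<le> n \<Longrightarrow> 0 < Q y"
  shows "(\<Sum>y\<le>n. f y * (P y - Q y))\<^sup>2 \<le> chi2 n P Q * (\<Sum>y\<le>n. (f y)\<^sup>2 * Q y)"
proof -
  have "(\<Sum>y\<le>n. f y * (P y - Q y)) = (\<Sum>y\<le>n. (f y * sqrt (Q y)) * ((P y - Q y) / sqrt (Q y)))"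
    using assms by (intro sum.cong) (auto simp: less_imp_neq[symmetric])
  also have "(\<dots>)\<^sup>2 \<le> (\<Sum>y\<le>n. (f y * sqrt (Q y))\<^sup>2) * (\<Sum>y\<le>n. ((P y - Q y) / sqrt (Q y))\<^sup>2)"
    by (rule Cauchy_Schwarz_ineq_sum)
  also have "\<dots> = (\<Sum>y\<le>n. (f y)\<^sup>2 * Q y) * chi2 n P Q"
    unfolding chi2_def using assms
    by (intro arg_cong2[where f = "(*)"] sum.cong)
      (auto simp: power_mult_distrib power_divide less_imp_le)
  finally show ?thesis
    by (simp add: mult.commute)
qed

text \<open>The test function on the output alphabet is \<open>T\<^sup>* u\<close>: its mean under \<open>P\<^sub>Y\<close> is the mean of
  \<open>G = T T\<^sup>* u\<close> under the input, which vanishes, while under the reference it is \<open>E[G]\<close>.\<close>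
lemma chi2_ge_test_poly:
  assumes "finite (set_pmf p)" "\<forall>x\<in>set_pmf p. poly G x = 0" "bernstein_gram n u = G"
  shows "(arcsine_mean G)\<^sup>2 \<le> chi2 n (binom_out n p) (ref_out n) * arcsine_mean (u * G)"
proof -
  define f where
    "f k = arcsine_mean (u * bernstein_poly n k) / arcsine_mean (bernstein_poly n k)" for k
  have G: "bernstein_op n f = G"
    using assms(3) by (simp add: bernstein_gram_def f_def[abs_def])
  have ref: "ref_out n k = arcsine_mean (bernstein_poly n k)" "0 < ref_out n k" if "k \<le> n" for k
    using that by (simp_all add: ref_out_eq_arcsine_mean arcsine_mean_bernstein_poly_pos)
  have "(\<Sum>k\<le>n. f k * binom_out n p k) = (\<Sum>x\<in>set_pmf p. pmf p x * poly (bernstein_op n f) x)"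
    by (simp add: binom_out_def poly_bernstein_op Bernstein_def sum_distrib_left sum_distrib_right
        sum.swap[of _ "{..n}"] mult_ac)
  also have "\<dots> = 0"
    using assms(2) by (simp add: G)
  finally have P: "(\<Sum>k\<le>n. f k * binom_out n p k) = 0" .
  have "(\<Sum>k\<le>n. f k * ref_out n k) = arcsine_mean (bernstein_op n f)"
    using ref by (simp add: bernstein_op_def arcsine_mean_sum arcsine_mean_smult)
  then have Q: "(\<Sum>k\<le>n. f k * ref_out n k) = arcsine_mean G"
    by (simp add: G)
  have "(\<Sum>k\<le>n. (f k)\<^sup>2 * ref_out n k) = (\<Sum>k\<le>n. f k * arcsine_mean (u * bernstein_poly n k))"
    using ref by (intro sum.cong) (auto simp: f_def power2_eq_square less_imp_neq[symmetric])
  also have "\<dots> = arcsine_mean (u * bernstein_op n f)"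
    by (simp add: bernstein_op_def sum_distrib_left arcsine_mean_sum arcsine_mean_smult)
  finally have Q2: "(\<Sum>k\<le>n. (f k)\<^sup>2 * ref_out n k) = arcsine_mean (u * G)"
    by (simp add: G)
  have "(\<Sum>k\<le>n. f k * (binom_out n p k - ref_out n k)) = - arcsine_mean G"
    using P Q by (simp add: right_diff_distrib sum_subtractf)
  then show ?thesis
    using Cauchy_Schwarz_chi2[of n "ref_out n" f "binom_out n p"] ref Q2 by simp
qed

lemma chi2_ge_nonneg_test_poly:
  assumes "finite (set_pmf p)" "\<forall>x\<in>set_pmf p. poly G x = 0" "degree G \<le> m" "m \<le> n"
    and bounds: "\<And>x. 0 \<le> x \<Longrightarrow> x \<le> 1 \<Longrightarrow> 0 \<le> poly G x \<and> poly G x \<le> M"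
  shows "gram_eigenvalue n m * arcsine_mean G \<le> M * chi2 n (binom_out n p) (ref_out n)"
proof -
  define X where "X = chi2 n (binom_out n p) (ref_out n)"
  define ev where "ev = gram_eigenvalue n m"
  obtain u where u: "bernstein_gram n u = G" "ev * arcsine_mean (u * G) \<le> arcsine_mean (G * G)"
    using bernstein_gram_preimage[OF assms(3,4)] by (auto simp: ev_def)
  have "0 \<le> X"
    unfolding X_def using ref_out_pos by (rule chi2_nonneg)
  have "0 < ev"
    using gram_eigenvalue_pos[OF assms(4)] by (simp add: ev_def)
  have "0 \<le> arcsine_mean G"
    using bounds by (simp add: arcsine_mean_nonneg)
  have "0 \<le> poly G 0 \<and> poly G 0 \<le> M"
    using bounds by simp
  then have "0 \<le> M"
    by linarith
  have "arcsine_mean (G * G) \<le> arcsine_mean (smult M G)"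
    using bounds by (intro arcsine_mean_mono) (simp add: mult_right_mono)
  then have GG: "arcsine_mean (G * G) \<le> M * arcsine_mean G"
    by (simp add: arcsine_mean_smult)
  have "ev * (arcsine_mean G)\<^sup>2 \<le> X * (ev * arcsine_mean (u * G))"
    using chi2_ge_test_poly[OF assms(1,2) u(1)] \<open>0 < ev\<close> by (simp add: X_def mult_left_mono mult_ac)
  also have "\<dots> \<le> X * (M * arcsine_mean G)"
    using u(2) GG \<open>0 \<le> X\<close> by (intro mult_left_mono) auto
  finally have "(ev * arcsine_mean G) * arcsine_mean G \<le> (M * X) * arcsine_mean G"
    by (simp add: power2_eq_square mult_ac)
  then show ?thesis
    using \<open>0 \<le> arcsine_mean G\<close> \<open>0 \<le> M\<close> \<open>0 \<le> X\<close>
    by (cases "arcsine_mean G = 0") (auto simp: ev_def X_def)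
qed

lemma B_bound_eq_gram_eigenvalue:
  assumes "2 * L - 2 \<le> n"
  shows "B_bound n K L = gram_eigenvalue n (2 * L - 2) * (real L - real K) / (2 * real L)"
proof -
  have "(\<Prod>j=1..2 * L - 2. (real n + real j) / (real n - real j + 1)) =
      (\<Prod>i<2 * L - 2. (real n + real i + 1) / (real n - real i))"
    unfolding One_nat_def prod.atLeast1_atMost_eq by (simp add: add_ac)
  also have "\<dots> = 1 / gram_eigenvalue n (2 * L - 2)"
    unfolding gram_eigenvalue_def by (simp add: prod_dividef)
  finally show ?thesis
    by (simp add: B_bound_def)
qed

lemma chi2_ge_card_support:
  assumes "finite (set_pmf p)" "2 * d \<le> n"
  shows "gram_eigenvalue n (2 * d) * (real d + 1 - real (card (set_pmf p)))
    \<le> (2 * real d + 1) * chi2 n (binom_out n p) (ref_out n)"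
proof -
  obtain K g where Kg: "vanishing_kernel d (set_pmf p) K g"
    using vanishing_kernel_exists[OF assms(1)] by blast
  then have "gram_eigenvalue n (2 * d) * arcsine_mean g
      \<le> (2 * real d + 1) * chi2 n (binom_out n p) (ref_out n)"
    using reproducing_kernel_diag_nonneg
    by (intro chi2_ge_nonneg_test_poly[OF assms(1) _ _ assms(2)]) (auto simp: vanishing_kernel_def)
  moreover have "real d + 1 - real (card (set_pmf p)) \<le> arcsine_mean g"
    using Kg by (simp add: vanishing_kernel_def)
  ultimately show ?thesis
    using gram_eigenvalue_pos[OF assms(2)] by (meson mult_left_mono less_imp_le order.trans)
qed

theorem theorem5:
  fixes n K L :: nat and p :: "real pmf"
  assumes "n \<ge> 1"
    and "finite (set_pmf p)"
    and "set_pmf p \<subseteq> {0..1}"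
    and "card (set_pmf p) = K"
    and "K < L"
    and "real L \<le> (real n + 2) / 2"
  shows "chi2 n (binom_out n p) (ref_out n) \<ge> B_bound n K L"
proof -
  define d where "d = L - 1"
  define X where "X = chi2 n (binom_out n p) (ref_out n)"
  have L: "real L = real d + 1" "2 * L - 2 = 2 * d" "2 * d \<le> n"
    using assms(5,6) by (simp_all add: d_def)
  have "B_bound n K L = gram_eigenvalue n (2 * d) * (real d + 1 - real K) / (2 * real d + 2)"
    using B_bound_eq_gram_eigenvalue[of L n K] L by simp
  also have "\<dots> \<le> (2 * real d + 1) * X / (2 * real d + 2)"
    using chi2_ge_card_support[OF assms(2) L(3)] assms(4) by (simp add: X_def divide_right_mono)
  also have "\<dots> \<le> X"
    using chi2_nonneg[of n "ref_out n"] ref_out_pos by (simp add: X_def field_simps)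
  finally show ?thesis
    by (simp add: X_def)
qed

end
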